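(* Let $d,m \in \mathbb{N}$, $s \in \{1,\dots,d\}$, and $M := 8 \lceil m^{1/s} \rceil$. Assume that $U \subset C([0,1]^d)$ satisfies \[ u_0 + \nu \cdot \frac{\lambda}{M s} \vartheta^{(s)}_{M,y} \in U \qquad \text{for all } \nu \in \{ \pm 1 \} \text{ and } y \in [0,1]^d \] for some $\lambda > 0$ and $u_0 \in C([0,1]^d)$. Then \[ \mathrm{err}_m^{MC} (U, L^p([0,1]^d)) \geq \frac{\lambda / 2}{(64 s)^{1 + \frac{s}{p}}} \cdot m^{-\frac{1}{p} - \frac{1}{s}} \qquad \text{for all } p \in [1,\infty]. \]
   Context: Let $\varrho(x)=\max\{0,x\}$. For $M>0$, $\sigma\in\mathbb{R}$: $\Lambda_{M,\sigma}(t)=0$ if $t\le\sigma-\frac1M$, and $\Lambda_{M,\sigma}(t)=1-M|t-\sigma|$ if $t\ge\sigma-\frac1M$. For $y\in\mathbb{R}^d$, $s\in\{1,\dots,d\}$: $\vartheta^{(s)}_{M,y}(x)=\varrho\big(\sum_{i=1}^s\Lambda_{M,y_i}(x_i)-(s-1)\big)$, $x\in\mathbb{R}^d$. For $p=\infty$, $1/p=s/p=0$. Algorithms: for a Banach space $Y$ and $U\subset C([0,1]^d)\cap Y$, $A:U\to Y$ is an adaptive deterministic method using $m$ point samples if there are $f_1\in[0,1]^d$, maps $f_i:([0,1]^d)^{i-1}\times\mathbb{R}^{i-1}\to[0,1]^d$ ($2\le i\le m$) and $Q:([0,1]^d)^m\times\mathbb{R}^m\to Y$ such that for all $u\in U$,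 with $x_1=f_1$, $x_i=f_i(x_1,\dots,x_{i-1},u(x_1),\dots,u(x_{i-1}))$, $A(u)=Q(x_1,\dots,x_m,u(x_1),\dots,u(x_m))$; these form $\mathrm{Alg}_m(U,Y)$. An adaptive random method using $m$ samples on average is $(\mathbf{A},\mathbf{m})$ with $\mathbf{A}=(A_\omega)_{\omega\in\Omega}$ over a probability space $(\Omega,\mathcal{F},\mathbb{P})$, $\mathbf{m}:\Omega\to\mathbb{N}$ measurable with $\mathbb{E}[\mathbf{m}]\le m$, $\omega\mapsto A_\omega(u)$ Borel measurable for each $u\in U$, and $A_\omega\in\mathrm{Alg}_{\mathbf{m}(\omega)}(U,Y)$ for all $\omega$; these form $\mathrm{Alg}^{MC}_m(U,Y)$. Define $\mathrm{err}^{MC}_m(U,Y)=\inf_{(\mathbf{A},\mathbf{m})\in\mathrm{Alg}^{MC}_m(U,Y)}\sup_{u\in U}\mathbb{E}[\|u-A_\omega(u)\|_Y]$. *)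

theory Defs
  imports "HOL-Analysis.Analysis" "HOL-Probability.Probability"
begin

text \<open>Points of R^d are functions nat => real; coordinate i (1-based in the paper) is index i-1.
  The unit cube [0,1]^d and Lebesgue measure on it (product of Lebesgue measures on [0,1]).\<close>

definition cube :: "nat \<Rightarrow> (nat \<Rightarrow> real) set" where
  "cube d = PiE {..<d} (\<lambda>_. {0..1})"

definition cube_measure :: "nat \<Rightarrow> (nat \<Rightarrow> real) measure" where
  "cube_measure d = PiM {..<d} (\<lambda>_. restrict_space lborel {0..1::real})"

definition Ccube :: "nat \<Rightarrow> ((nat \<Rightarrow> real) \<Rightarrow> real) set" where
  "Ccube d = {u. continuous_on (cube d) u}"

definition pinv :: "ereal \<Rightarrow> real" where
  "pinv p = (if p = \<infinity> then 0 else 1 / real_of_ereal p)"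

definition Lp_space :: "nat \<Rightarrow> ereal \<Rightarrow> ((nat \<Rightarrow> real) \<Rightarrow> real) set" where
  "Lp_space d p = {f. f \<in> borel_measurable (cube_measure d) \<and>
     (if p = \<infinity> then esssup (cube_measure d) (\<lambda>x. ennreal \<bar>f x\<bar>) < \<top>
      else integrable (cube_measure d) (\<lambda>x. \<bar>f x\<bar> powr real_of_ereal p))}"

definition Lp_norm :: "nat \<Rightarrow> ereal \<Rightarrow> ((nat \<Rightarrow> real) \<Rightarrow> real) \<Rightarrow> ennreal" where
  "Lp_norm d p f = (if p = \<infinity> then esssup (cube_measure d) (\<lambda>x. ennreal \<bar>f x\<bar>)
     else ennreal ((\<integral>x. \<bar>f x\<bar> powr real_of_ereal p \<partial>cube_measure d) powr (1 / real_of_ereal p)))"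

definition Lp_borel :: "nat \<Rightarrow> ereal \<Rightarrow> ((nat \<Rightarrow> real) \<Rightarrow> real) measure" where
  "Lp_borel d p = sigma (Lp_space d p)
     {S. S \<subseteq> Lp_space d p \<and> (\<forall>f\<in>S. \<exists>e::real>0. \<forall>g\<in>Lp_space d p.
          Lp_norm d p (\<lambda>x. g x - f x) < ennreal e \<longrightarrow> g \<in> S)}"

definition Lam :: "real \<Rightarrow> real \<Rightarrow> real \<Rightarrow> real" where
  "Lam M \<sigma> t = (if t \<le> \<sigma> - 1 / M then 0 else 1 - M * \<bar>t - \<sigma>\<bar>)"

definition theta :: "nat \<Rightarrow> real \<Rightarrow> (nat \<Rightarrow> real) \<Rightarrow> (nat \<Rightarrow> real) \<Rightarrow> real" where
  "theta s M y x = max 0 ((\<Sum>i<s. Lam M (y i) (x i)) - (real s - 1))"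

fun samples :: "((nat \<Rightarrow> real) list \<Rightarrow> real list \<Rightarrow> (nat \<Rightarrow> real)) \<Rightarrow> ((nat \<Rightarrow> real) \<Rightarrow> real)
    \<Rightarrow> nat \<Rightarrow> (nat \<Rightarrow> real) list" where
  "samples f u 0 = []"
| "samples f u (Suc n) = (let xs = samples f u n in xs @ [f xs (map u xs)])"

definition Alg :: "nat \<Rightarrow> nat \<Rightarrow> ((nat \<Rightarrow> real) \<Rightarrow> real) set \<Rightarrow> ((nat \<Rightarrow> real) \<Rightarrow> real) set
    \<Rightarrow> (((nat \<Rightarrow> real) \<Rightarrow> real) \<Rightarrow> ((nat \<Rightarrow> real) \<Rightarrow> real)) set" where
  "Alg d m U Y = {A. \<exists>f Q. (\<forall>xs ys. f xs ys \<in> cube d) \<and> (\<forall>xs ys. Q xs ys \<in> Y) \<and>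
      (\<forall>u\<in>U. A u = Q (samples f u m) (map u (samples f u m)))}"

text \<open>Alg^MC_m(U, L^p): adaptive random methods using m samples on average,
  over probability spaces whose sample space lives in the type 'w.\<close>
definition Alg_MC :: "'w itself \<Rightarrow> nat \<Rightarrow> ereal \<Rightarrow> ((nat \<Rightarrow> real) \<Rightarrow> real) set \<Rightarrow> nat \<Rightarrow>
    ('w measure \<times> ('w \<Rightarrow> ((nat \<Rightarrow> real) \<Rightarrow> real) \<Rightarrow> ((nat \<Rightarrow> real) \<Rightarrow> real)) \<times> ('w \<Rightarrow> nat)) set" where
  "Alg_MC _ d p U m = {(P, A, mm). prob_space P \<and>
      mm \<in> measurable P (count_space UNIV) \<and>
      (\<integral>\<^sup>+ \<omega>. of_nat (mm \<omega>) \<partial>P) \<le> of_nat m \<and>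
      (\<forall>u\<in>U. (\<lambda>\<omega>. A \<omega> u) \<in> measurable P (Lp_borel d p)) \<and>
      (\<forall>\<omega>\<in>space P. A \<omega> \<in> Alg d (mm \<omega>) U (Lp_space d p))}"

definition err_MC :: "'w itself \<Rightarrow> nat \<Rightarrow> ereal \<Rightarrow> ((nat \<Rightarrow> real) \<Rightarrow> real) set \<Rightarrow> nat \<Rightarrow> ennreal" where
  "err_MC W d p U m = (INF (P, A, mm) \<in> Alg_MC W d p U m.
      SUP u\<in>U. \<integral>\<^sup>+ \<omega>. Lp_norm d p (\<lambda>x. u x - A \<omega> u x) \<partial>P)"

end

theory Submission
  imports Defs
begin

text \<open>Bakhvalov's bump technique. For \<open>L = 4\<lceil>m\<^sup>1\<^sup>/\<^sup>s\<rceil>\<close> and \<open>M = 2L\<close>, the \<open>N = L\<^sup>s\<close> bumps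
  \<open>theta s M y\<close> centred at a grid of mesh \<open>2/M\<close> in the first \<open>s\<close> coordinates have disjoint
  supports, so a point meets at most one of them. A deterministic method using \<open>n\<close> samples
  therefore sees only \<open>u\<^sub>0\<close> for all but \<open>n\<close> bumps and returns the same output on \<open>u\<^sub>0 + c theta\<close>
  and \<open>u\<^sub>0 - c theta\<close>; as \<open>theta \<ge> 1/2\<close> on a box of volume \<open>(Ms)\<^sup>-\<^sup>s\<close>, these two errors add up
  to at least \<open>c (Ms)\<^sup>-\<^sup>s\<^sup>/\<^sup>p\<close>. Summing over the bumps and averaging over the randomness with
  \<open>\<bbbE>[n] \<le> m\<close>, the largest expected error is at least \<open>c (Ms)\<^sup>-\<^sup>s\<^sup>/\<^sup>p (N - m) / (2N)\<close>, and
  \<open>N \<ge> 4m\<close> turns this into the stated rate.\<close>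

section \<open>The unit cube as a probability space\<close>

abbreviation unit_lborel :: "real measure" where
  "unit_lborel \<equiv> restrict_space lborel {0..1}"

lemma prob_space_unit_lborel: "prob_space unit_lborel"
  by (rule prob_space_restrict_space) (simp_all add: emeasure_lborel_Icc)

interpretation unit_lborel_product: product_sigma_finite "\<lambda>_::nat. unit_lborel"
proof -
  interpret prob_space unit_lborel by (rule prob_space_unit_lborel)
  show "product_sigma_finite (\<lambda>_::nat. unit_lborel)"
    by (simp add: product_sigma_finite_def sigma_finite_measure_axioms)
qed

lemma sets_unit_lborel_Icc: "0 \<le> a \<Longrightarrow> b \<le> 1 \<Longrightarrow> {a..b} \<in> sets unit_lborel"
  by (subst sets_restrict_space_iff) auto

lemma emeasure_unit_lborel_Icc:
  "0 \<le> a \<Longrightarrow> a \<le> b \<Longrightarrow> b \<le> 1 \<Longrightarrow> emeasure unit_lborel {a..b} = ennreal (b - a)"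
  by (subst emeasure_restrict_space) (auto simp: emeasure_lborel_Icc)

lemma space_cube_measure: "space (cube_measure d) = cube d"
  by (simp add: cube_measure_def cube_def space_PiM space_restrict_space)

lemma prob_space_cube_measure: "prob_space (cube_measure d)"
  unfolding cube_measure_def by (rule prob_space_PiM) (rule prob_space_unit_lborel)

lemma compact_cube: "compact (cube d)"
proof -
  define S where "S = (\<lambda>i::nat. if i < d then {0..1::real} else {undefined})"
  have eq: "cube d = PiE UNIV S"
    unfolding cube_def S_def by (auto simp: PiE_def Pi_def extensional_def)
  have "compactin (product_topology (\<lambda>i. euclidean) UNIV) (PiE UNIV S)"
    unfolding compactin_PiE by (auto simp: S_def)
  then show ?thesis unfolding eq euclidean_product_topology by simp
qed

lemma borel_measurable_cube_component: "(\<lambda>x. x i) \<in> borel_measurable (cube_measure d)"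
proof (cases "i < d")
  case True
  have "(\<lambda>x. x i) \<in> measurable (cube_measure d) unit_lborel"
    unfolding cube_measure_def using True by (intro measurable_component_singleton) auto
  then have "(\<lambda>x. x i) \<in> measurable (cube_measure d) lborel"
    by (rule measurable_restrict_space2_iff[THEN iffD1, THEN conjunct1])
  then show ?thesis by simp
next
  case False
  have "\<And>x. x \<in> space (cube_measure d) \<Longrightarrow> x i = undefined"
    using False by (auto simp add: space_cube_measure cube_def PiE_def extensional_def)
  then show ?thesis
    using measurable_cong[of "cube_measure d" "\<lambda>x. x i" "\<lambda>x. undefined" borel] by simp
qed

text \<open>The Borel sets of the product topology on \<open>nat \<Rightarrow> real\<close> are generated by finitely
  restricted boxes, countably many of which suffice (second countability).\<close>
lemma measurable_cube_measure_borel: "(\<lambda>x. x) \<in> measurable (cube_measure d) borel"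
proof (rule borel_measurableI)
  fix S :: "(nat \<Rightarrow> real) set" assume "open S"
  obtain K :: "(nat \<Rightarrow> real) set set" where K: "topological_basis K" "countable K"
    "\<And>k. k \<in> K \<Longrightarrow> \<exists>X. k = Pi\<^sub>E UNIV X \<and> (\<forall>i. open (X i)) \<and> finite {i. X i \<noteq> UNIV}"
    using product_topology_countable_basis by metis
  obtain B where B: "B \<subseteq> K" "\<Union>B = S"
    using K(1) \<open>open S\<close> unfolding topological_basis_def by blast
  have "k \<inter> space (cube_measure d) \<in> sets (cube_measure d)" if "k \<in> B" for k
  proof -
    obtain X where X: "k = Pi\<^sub>E UNIV X" "\<And>i. open (X i)" "finite {i. X i \<noteq> UNIV}"
      using K(3) B(1) \<open>k \<in> B\<close> by blast
    have "k \<inter> space (cube_measure d) =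
        {x \<in> space (cube_measure d). \<forall>i\<in>{i. X i \<noteq> UNIV}. x i \<in> X i}"
      unfolding X(1) by (auto simp: PiE_def Pi_def)
    also have "\<dots> \<in> sets (cube_measure d)"
    proof (rule sets.sets_Collect_finite_All[OF _ X(3)])
      fix i
      have "(\<lambda>x. x i) -` X i \<inter> space (cube_measure d) \<in> sets (cube_measure d)"
        by (rule measurable_sets[OF borel_measurable_cube_component]) (simp add: X(2))
      then show "{x \<in> space (cube_measure d). x i \<in> X i} \<in> sets (cube_measure d)"
        by (simp add: vimage_def Int_def conj_commute)
    qed
    finally show ?thesis .
  qed
  moreover have "countable B" using B K(2) countable_subset by blast
  ultimately have "(\<Union>k\<in>B. k \<inter> space (cube_measure d)) \<in> sets (cube_measure d)"
    by (intro sets.countable_UN'') auto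
  moreover have "(\<lambda>x. x) -` S \<inter> space (cube_measure d) = (\<Union>k\<in>B. k \<inter> space (cube_measure d))"
    using B(2) by auto
  ultimately show "(\<lambda>x. x) -` S \<inter> space (cube_measure d) \<in> sets (cube_measure d)" by simp
qed

lemma continuous_on_cube_borel_measurable:
  assumes "continuous_on (cube d) u"
  shows "u \<in> borel_measurable (cube_measure d)"
proof -
  have "(\<lambda>x. x) \<in> measurable (cube_measure d) (restrict_space borel (cube d))"
    by (rule measurable_restrict_space2[OF _ measurable_cube_measure_borel])
      (simp add: space_cube_measure)
  moreover have "u \<in> borel_measurable (restrict_space borel (cube d))"
    by (rule borel_measurable_continuous_on_restrict[OF assms])
  ultimately show ?thesis using measurable_comp by fastforce
qed

definition cube_box :: "nat \<Rightarrow> nat \<Rightarrow> (nat \<Rightarrow> real) \<Rightarrow> (nat \<Rightarrow> real) \<Rightarrow> (nat \<Rightarrow> real) set" where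
  "cube_box d s lo hi = PiE {..<d} (\<lambda>i. if i < s then {lo i..hi i} else {0..1})"

lemma
  assumes "\<And>i. i < s \<Longrightarrow> 0 \<le> lo i \<and> lo i \<le> hi i \<and> hi i \<le> 1" and "s \<le> d"
  shows sets_cube_box: "cube_box d s lo hi \<in> sets (cube_measure d)"
    and measure_cube_box: "measure (cube_measure d) (cube_box d s lo hi) = (\<Prod>i<s. hi i - lo i)"
proof -
  have sets: "(if i < s then {lo i..hi i} else {0..1}) \<in> sets unit_lborel" for i
    using assms(1)[of i] by (auto intro!: sets_unit_lborel_Icc)
  show "cube_box d s lo hi \<in> sets (cube_measure d)"
    unfolding cube_box_def cube_measure_def by (rule sets_PiM_I_finite) (use sets in auto)
  have "emeasure (cube_measure d) (cube_box d s lo hi) =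
      (\<Prod>i<d. emeasure unit_lborel (if i < s then {lo i..hi i} else {0..1}))"
    unfolding cube_box_def cube_measure_def
    by (rule unit_lborel_product.emeasure_PiM) (use sets in auto)
  also have "\<dots> = (\<Prod>i<d. ennreal (if i < s then hi i - lo i else 1))"
    using assms(1) by (intro prod.cong refl) (auto simp: emeasure_unit_lborel_Icc)
  also have "\<dots> = ennreal (\<Prod>i<d. if i < s then hi i - lo i else 1)"
    using assms(1) by (intro prod_ennreal) auto
  also have "(\<Prod>i<d. if i < s then hi i - lo i else 1) = (\<Prod>i<s. hi i - lo i)"
    using assms(2) by (subst prod.mono_neutral_right[of "{..<d}" "{..<s}"]) auto
  moreover have "0 \<le> (\<Prod>i<s. hi i - lo i)"
    by (rule prod_nonneg) (use assms(1) in auto)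
  ultimately show "measure (cube_measure d) (cube_box d s lo hi) = (\<Prod>i<s. hi i - lo i)"
    by (simp add: measure_def)
qed

section \<open>The spaces \<open>L\<^sup>p\<close> on the cube\<close>

abbreviation Lp_dist :: "nat \<Rightarrow> ereal \<Rightarrow> ((nat \<Rightarrow> real) \<Rightarrow> real) \<Rightarrow> ((nat \<Rightarrow> real) \<Rightarrow> real) \<Rightarrow> ennreal"
  where "Lp_dist d p f g \<equiv> Lp_norm d p (\<lambda>x. f x - g x)"

lemma real_of_ereal_ge_1: "1 \<le> p \<Longrightarrow> p \<noteq> \<infinity> \<Longrightarrow> 1 \<le> real_of_ereal p"
  by (cases p) auto

lemma pinv_nonneg: "1 \<le> p \<Longrightarrow> 0 \<le> pinv p"
  by (cases p) (auto simp: pinv_def)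

lemma Lp_space_borel_measurable: "f \<in> Lp_space d p \<Longrightarrow> f \<in> borel_measurable (cube_measure d)"
  by (simp add: Lp_space_def)

lemma Lp_space_finite_iff:
  "p \<noteq> \<infinity> \<Longrightarrow> f \<in> Lp_space d p \<longleftrightarrow> f \<in> borel_measurable (cube_measure d) \<and>
      integrable (cube_measure d) (\<lambda>x. \<bar>f x\<bar> powr real_of_ereal p)"
  by (simp add: Lp_space_def)

lemma Lp_space_infinity_iff:
  "f \<in> Lp_space d \<infinity> \<longleftrightarrow>
    f \<in> borel_measurable (cube_measure d) \<and> (\<exists>B. AE x in cube_measure d. \<bar>f x\<bar> \<le> B)"
proof
  assume f: "f \<in> Lp_space d \<infinity>"
  then have "esssup (cube_measure d) (\<lambda>x. ennreal \<bar>f x\<bar>) < \<top>" by (simp add: Lp_space_def)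
  then obtain B where B: "esssup (cube_measure d) (\<lambda>x. ennreal \<bar>f x\<bar>) = ennreal B" "B \<ge> 0"
    by (cases "esssup (cube_measure d) (\<lambda>x. ennreal \<bar>f x\<bar>)") auto
  have "AE x in cube_measure d. ennreal \<bar>f x\<bar> \<le> ennreal B"
    using esssup_AE[of "\<lambda>x. ennreal \<bar>f x\<bar>" "cube_measure d"] B by simp
  then have "AE x in cube_measure d. \<bar>f x\<bar> \<le> B"
    by eventually_elim (use B in \<open>simp add: ennreal_le_iff\<close>)
  then show "f \<in> borel_measurable (cube_measure d) \<and> (\<exists>B. AE x in cube_measure d. \<bar>f x\<bar> \<le> B)"
    using f by (blast intro: Lp_space_borel_measurable)
next
  assume "f \<in> borel_measurable (cube_measure d) \<and> (\<exists>B. AE x in cube_measure d. \<bar>f x\<bar> \<le> B)"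
  then obtain B where f: "f \<in> borel_measurable (cube_measure d)"
    and B: "AE x in cube_measure d. \<bar>f x\<bar> \<le> B" by blast
  have "AE x in cube_measure d. ennreal \<bar>f x\<bar> \<le> ennreal B"
    using B by eventually_elim (simp add: ennreal_leI)
  then have "esssup (cube_measure d) (\<lambda>x. ennreal \<bar>f x\<bar>) \<le> ennreal B"
    using f by (intro esssup_I) auto
  then show "f \<in> Lp_space d \<infinity>"
    using f ennreal_less_top le_less_trans by (fastforce simp: Lp_space_def)
qed

lemma powr_abs_add_le:
  fixes a b K q :: real
  assumes "q \<ge> 1" "K \<ge> 0"
  shows "(K * (\<bar>a\<bar> + \<bar>b\<bar>)) powr q \<le> (2 * K) powr q * (\<bar>a\<bar> powr q + \<bar>b\<bar> powr q)"
proof -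
  define mx where "mx = max \<bar>a\<bar> \<bar>b\<bar>"
  have "\<bar>a\<bar> + \<bar>b\<bar> \<le> 2 * mx" by (simp add: mx_def)
  then have "K * (\<bar>a\<bar> + \<bar>b\<bar>) \<le> K * (2 * mx)"
    using assms by (intro mult_left_mono) auto
  then have "(K * (\<bar>a\<bar> + \<bar>b\<bar>)) powr q \<le> ((2 * K) * mx) powr q"
    using assms by (intro powr_mono2) auto
  also have "\<dots> = (2 * K) powr q * mx powr q"
    using assms by (simp add: powr_mult mx_def)
  also have "\<dots> \<le> (2 * K) powr q * (\<bar>a\<bar> powr q + \<bar>b\<bar> powr q)"
    by (intro mult_left_mono) (auto simp: mx_def max_def)
  finally show ?thesis .
qed

lemma Lp_space_dominated:
  assumes p: "1 \<le> p" and f: "f \<in> Lp_space d p" and h: "h \<in> Lp_space d p"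
    and g: "g \<in> borel_measurable (cube_measure d)" and K: "K \<ge> 0"
    and le: "\<And>x. x \<in> cube d \<Longrightarrow> \<bar>g x\<bar> \<le> K * (\<bar>f x\<bar> + \<bar>h x\<bar>)"
  shows "g \<in> Lp_space d p"
proof (cases "p = \<infinity>")
  case True
  obtain Bf Bh where "AE x in cube_measure d. \<bar>f x\<bar> \<le> Bf" "AE x in cube_measure d. \<bar>h x\<bar> \<le> Bh"
    using f h True Lp_space_infinity_iff by blast
  moreover have "AE x in cube_measure d. \<bar>g x\<bar> \<le> K * (\<bar>f x\<bar> + \<bar>h x\<bar>)"
    by (rule AE_I2) (simp add: le space_cube_measure)
  ultimately have "AE x in cube_measure d. \<bar>g x\<bar> \<le> K * (Bf + Bh)"
  proof eventually_elim
    case (elim x)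
    then show ?case using K by (smt (verit) mult_left_mono)
  qed
  then show ?thesis using True g Lp_space_infinity_iff by blast
next
  case False
  define q where "q = real_of_ereal p"
  have q: "q \<ge> 1" using real_of_ereal_ge_1[OF p False] q_def by simp
  have "integrable (cube_measure d) (\<lambda>x. \<bar>f x\<bar> powr q)" "integrable (cube_measure d) (\<lambda>x. \<bar>h x\<bar> powr q)"
    using f h False Lp_space_finite_iff q_def by blast+
  then have "integrable (cube_measure d) (\<lambda>x. (2 * K) powr q * (\<bar>f x\<bar> powr q + \<bar>h x\<bar> powr q))"
    by auto
  moreover have "(\<lambda>x. \<bar>g x\<bar> powr q) \<in> borel_measurable (cube_measure d)" using g by measurable
  moreover have "AE x in cube_measure d.
      norm (\<bar>g x\<bar> powr q) \<le> norm ((2 * K) powr q * (\<bar>f x\<bar> powr q + \<bar>h x\<bar> powr q))"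
  proof (rule AE_I2)
    fix x assume "x \<in> space (cube_measure d)"
    then have "\<bar>g x\<bar> powr q \<le> (K * (\<bar>f x\<bar> + \<bar>h x\<bar>)) powr q"
      using le q by (intro powr_mono2) (auto simp: space_cube_measure)
    also have "\<dots> \<le> (2 * K) powr q * (\<bar>f x\<bar> powr q + \<bar>h x\<bar> powr q)"
      using powr_abs_add_le[OF q K] .
    finally show "norm (\<bar>g x\<bar> powr q) \<le> norm ((2 * K) powr q * (\<bar>f x\<bar> powr q + \<bar>h x\<bar> powr q))"
      by simp
  qed
  ultimately have "integrable (cube_measure d) (\<lambda>x. \<bar>g x\<bar> powr q)"
    by (rule Bochner_Integration.integrable_bound)
  then show ?thesis using g False Lp_space_finite_iff q_def by blast
qed

lemma Lp_space_bounded: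
  assumes p: "1 \<le> p" and g: "g \<in> borel_measurable (cube_measure d)"
    and le: "\<And>x. x \<in> cube d \<Longrightarrow> \<bar>g x\<bar> \<le> B"
  shows "g \<in> Lp_space d p"
proof -
  interpret prob_space "cube_measure d" by (rule prob_space_cube_measure)
  have B: "AE x in cube_measure d. \<bar>g x\<bar> \<le> B"
    by (rule AE_I2) (simp add: le space_cube_measure)
  show ?thesis
  proof (cases "p = \<infinity>")
    case True
    then show ?thesis using B g Lp_space_infinity_iff by blast
  next
    case False
    define q where "q = real_of_ereal p"
    have q: "q \<ge> 1" using real_of_ereal_ge_1[OF p False] q_def by simp
    have "AE x in cube_measure d. norm (\<bar>g x\<bar> powr q) \<le> B powr q"
      using B by eventually_elim (use q in \<open>auto intro!: powr_mono2\<close>)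
    moreover have "(\<lambda>x. \<bar>g x\<bar> powr q) \<in> borel_measurable (cube_measure d)" using g by measurable
    ultimately have "integrable (cube_measure d) (\<lambda>x. \<bar>g x\<bar> powr q)"
      by (rule integrable_const_bound)
    then show ?thesis using g False Lp_space_finite_iff q_def by blast
  qed
qed

lemma Ccube_subset_Lp_space: "1 \<le> p \<Longrightarrow> Ccube d \<subseteq> Lp_space d p"
proof
  fix u assume p: "1 \<le> p" and "u \<in> Ccube d"
  then have u: "continuous_on (cube d) u" by (simp add: Ccube_def)
  then have "bounded (u ` cube d)"
    by (intro compact_imp_bounded compact_continuous_image compact_cube)
  then obtain B where "\<And>x. x \<in> cube d \<Longrightarrow> \<bar>u x\<bar> \<le> B"
    by (auto simp: bounded_iff)
  then show "u \<in> Lp_space d p"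
    by (rule Lp_space_bounded[OF p continuous_on_cube_borel_measurable[OF u]])
qed

lemma Lp_space_add:
  assumes "1 \<le> p" "f \<in> Lp_space d p" "h \<in> Lp_space d p"
  shows "(\<lambda>x. f x + h x) \<in> Lp_space d p"
  by (rule Lp_space_dominated[where K=1, OF assms])
    (simp_all add: borel_measurable_add[OF Lp_space_borel_measurable[OF assms(2)] Lp_space_borel_measurable[OF assms(3)]])

lemma Lp_space_diff:
  assumes "1 \<le> p" "f \<in> Lp_space d p" "h \<in> Lp_space d p"
  shows "(\<lambda>x. f x - h x) \<in> Lp_space d p"
  by (rule Lp_space_dominated[where K=1, OF assms])
    (simp_all add: borel_measurable_diff[OF Lp_space_borel_measurable[OF assms(2)] Lp_space_borel_measurable[OF assms(3)]] abs_triangle_ineq4)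

lemma Lp_space_cmult:
  assumes "1 \<le> p" "f \<in> Lp_space d p"
  shows "(\<lambda>x. c * f x) \<in> Lp_space d p"
  by (rule Lp_space_dominated[where K="\<bar>c\<bar>", OF assms assms(2)])
    (simp_all add: borel_measurable_times[OF borel_measurable_const Lp_space_borel_measurable[OF assms(2)]] abs_mult)

lemma powr_convex_combination_le:
  fixes q t a b :: real
  assumes q: "q \<ge> 1" and t: "0 \<le> t" "t \<le> 1" and ab: "a \<ge> 0" "b \<ge> 0"
  shows "((1 - t) * a + t * b) powr q \<le> (1 - t) * a powr q + t * b powr q"
proof -
  have powr_le_self: "x powr q \<le> x" if "0 \<le> x" "x \<le> 1" for x :: real
    using that q powr_le_one_le by (cases "x = 0") auto
  consider "a > 0" "b > 0" | "a = 0" | "b = 0" using ab by linarith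
  then show ?thesis
  proof cases
    case 1
    then show ?thesis using convex_onD[OF powr_convex[OF q], of t a b] t by simp
  next
    case 2
    have "(t * b) powr q = t powr q * b powr q" using t ab by (simp add: powr_mult)
    also have "\<dots> \<le> t * b powr q" using powr_le_self[OF t] by (intro mult_right_mono) auto
    finally show ?thesis using 2 q by simp
  next
    case 3
    have "((1 - t) * a) powr q = (1 - t) powr q * a powr q" using t ab by (simp add: powr_mult)
    also have "\<dots> \<le> (1 - t) * a powr q" using powr_le_self[of "1 - t"] t by (intro mult_right_mono) auto
    finally show ?thesis using 3 q by simp
  qed
qed

lemma abs_add_powr_le_convex:
  fixes a b A B q :: real
  assumes q: "q \<ge> 1" and A: "A > 0" and B: "B > 0"
  shows "\<bar>a + b\<bar> powr q \<le>
    (A + B) powr q * (A / (A + B) * (\<bar>a\<bar> powr q / A powr q) + B / (A + B) * (\<bar>b\<bar> powr q / B powr q))"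
proof -
  define t where "t = B / (A + B)"
  have t: "0 \<le> t" "t \<le> 1" "1 - t = A / (A + B)" using A B by (auto simp: t_def field_simps)
  have "\<bar>a + b\<bar> powr q \<le> (\<bar>a\<bar> + \<bar>b\<bar>) powr q"
    using q by (intro powr_mono2) auto
  also have "\<bar>a\<bar> + \<bar>b\<bar> = (A + B) * ((1 - t) * (\<bar>a\<bar> / A) + t * (\<bar>b\<bar> / B))"
    unfolding t(3) t_def using A B by (simp add: divide_simps)
  also have "((A + B) * ((1 - t) * (\<bar>a\<bar> / A) + t * (\<bar>b\<bar> / B))) powr q =
      (A + B) powr q * ((1 - t) * (\<bar>a\<bar> / A) + t * (\<bar>b\<bar> / B)) powr q"
    using A B t by (subst powr_mult) auto
  also have "\<dots> \<le> (A + B) powr q * ((1 - t) * (\<bar>a\<bar> / A) powr q + t * (\<bar>b\<bar> / B) powr q)"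
    using A B t q by (intro mult_left_mono powr_convex_combination_le) auto
  finally show ?thesis
    unfolding t_def[symmetric] t(3)[symmetric] using A B by (simp add: powr_divide)
qed

text \<open>With \<open>A, B\<close> slightly above the two norms, integrate the convexity bound above.\<close>
lemma Minkowski_inequality:
  fixes q :: real
  assumes q: "q \<ge> 1"
    and fi: "integrable M (\<lambda>x. \<bar>f x\<bar> powr q)" and gi: "integrable M (\<lambda>x. \<bar>g x\<bar> powr q)"
    and fgi: "integrable M (\<lambda>x. \<bar>f x + g x\<bar> powr q)"
  shows "(\<integral>x. \<bar>f x + g x\<bar> powr q \<partial>M) powr (1/q) \<le>
         (\<integral>x. \<bar>f x\<bar> powr q \<partial>M) powr (1/q) + (\<integral>x. \<bar>g x\<bar> powr q \<partial>M) powr (1/q)"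
proof -
  define If where "If = (\<integral>x. \<bar>f x\<bar> powr q \<partial>M)"
  define Ig where "Ig = (\<integral>x. \<bar>g x\<bar> powr q \<partial>M)"
  define Ifg where "Ifg = (\<integral>x. \<bar>f x + g x\<bar> powr q \<partial>M)"
  have nonneg: "If \<ge> 0" "Ig \<ge> 0" "Ifg \<ge> 0"
    unfolding If_def Ig_def Ifg_def by (auto intro: integral_nonneg_AE)
  have root_powr: "(x powr (1/q)) powr q = x" if "x \<ge> 0" for x :: real
    using that q by (simp add: powr_powr)
  show ?thesis unfolding If_def[symmetric] Ig_def[symmetric] Ifg_def[symmetric]
  proof (rule field_le_epsilon)
    fix e :: real assume e: "0 < e"
    define A where "A = If powr (1/q) + e/2"
    define B where "B = Ig powr (1/q) + e/2"
    have A: "A > 0" "If \<le> A powr q" and B: "B > 0" "Ig \<le> B powr q"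
      using e q nonneg root_powr[of If] root_powr[of Ig]
        powr_mono2[of q "If powr (1/q)" A] powr_mono2[of q "Ig powr (1/q)" B]
      by (auto simp: A_def B_def add_nonneg_pos)
    have "Ifg \<le> (\<integral>x. (A + B) powr q * (A / (A + B) * (\<bar>f x\<bar> powr q / A powr q) +
        B / (A + B) * (\<bar>g x\<bar> powr q / B powr q)) \<partial>M)"
      unfolding Ifg_def using fgi fi gi abs_add_powr_le_convex[OF q A(1) B(1)]
      by (intro integral_mono) auto
    also have "\<dots> = (A + B) powr q * (A / (A + B) * (If / A powr q) + B / (A + B) * (Ig / B powr q))"
      using fi gi by (simp add: If_def Ig_def)
    also have "\<dots> \<le> (A + B) powr q * (A / (A + B) * 1 + B / (A + B) * 1)"
      using A B by (intro mult_left_mono add_mono) (auto simp: divide_le_eq_1)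
    also have "\<dots> = (A + B) powr q"
      using A B by (simp add: add_divide_distrib[symmetric])
    finally have "Ifg powr (1/q) \<le> ((A + B) powr q) powr (1/q)"
      using nonneg q by (intro powr_mono2) auto
    also have "\<dots> = A + B" using A B q by (simp add: powr_powr)
    finally show "Ifg powr (1/q) \<le> If powr (1/q) + Ig powr (1/q) + e"
      by (simp add: A_def B_def)
  qed
qed

lemma Lp_norm_triangle:
  assumes p: "1 \<le> p" and f: "f \<in> Lp_space d p" and g: "g \<in> Lp_space d p"
  shows "Lp_norm d p (\<lambda>x. f x + g x) \<le> Lp_norm d p f + Lp_norm d p g"
proof (cases "p = \<infinity>")
  case True
  have [measurable]: "f \<in> borel_measurable (cube_measure d)" "g \<in> borel_measurable (cube_measure d)"
    using f g by (simp_all add: Lp_space_borel_measurable)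
  let ?Ef = "esssup (cube_measure d) (\<lambda>x. ennreal \<bar>f x\<bar>)"
  let ?Eg = "esssup (cube_measure d) (\<lambda>x. ennreal \<bar>g x\<bar>)"
  have "AE x in cube_measure d. ennreal \<bar>f x + g x\<bar> \<le> ?Ef + ?Eg"
    using esssup_AE[of "\<lambda>x. ennreal \<bar>f x\<bar>" "cube_measure d"]
      esssup_AE[of "\<lambda>x. ennreal \<bar>g x\<bar>" "cube_measure d"]
  proof eventually_elim
    case (elim x)
    have "ennreal \<bar>f x + g x\<bar> \<le> ennreal \<bar>f x\<bar> + ennreal \<bar>g x\<bar>"
      by (simp add: ennreal_plus[symmetric] ennreal_leI del: ennreal_plus)
    also have "\<dots> \<le> ?Ef + ?Eg" using elim by (intro add_mono) auto
    finally show ?case .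
  qed
  then have "esssup (cube_measure d) (\<lambda>x. ennreal \<bar>f x + g x\<bar>) \<le> ?Ef + ?Eg"
    by (intro esssup_I) measurable
  then show ?thesis using True by (simp add: Lp_norm_def)
next
  case False
  define q where "q = real_of_ereal p"
  have q: "q \<ge> 1" using real_of_ereal_ge_1[OF p False] q_def by simp
  have "(\<lambda>x. f x + g x) \<in> Lp_space d p" by (rule Lp_space_add[OF p f g])
  then have "(\<integral>x. \<bar>f x + g x\<bar> powr q \<partial>cube_measure d) powr (1/q) \<le>
      (\<integral>x. \<bar>f x\<bar> powr q \<partial>cube_measure d) powr (1/q) + (\<integral>x. \<bar>g x\<bar> powr q \<partial>cube_measure d) powr (1/q)"
    using f g False q_def by (intro Minkowski_inequality[OF q]) (simp_all add: Lp_space_finite_iff)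
  then show ?thesis using False
    by (simp add: Lp_norm_def q_def[symmetric] ennreal_plus[symmetric] ennreal_leI del: ennreal_plus)
qed

lemma Lp_dist_commute: "Lp_dist d p f g = Lp_dist d p g f"
  by (simp add: Lp_norm_def abs_minus_commute)

lemma Lp_norm_less_top: "f \<in> Lp_space d p \<Longrightarrow> Lp_norm d p f < \<top>"
  by (auto simp: Lp_norm_def Lp_space_def)

lemma space_Lp_borel: "space (Lp_borel d p) = Lp_space d p"
  unfolding Lp_borel_def by (rule space_measure_of) auto

lemma sets_Lp_borelI:
  assumes "S \<subseteq> Lp_space d p"
    and "\<And>f. f \<in> S \<Longrightarrow> \<exists>e::real>0. \<forall>g\<in>Lp_space d p. Lp_dist d p g f < ennreal e \<longrightarrow> g \<in> S"
  shows "S \<in> sets (Lp_borel d p)"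
  using assms unfolding Lp_borel_def by (subst sets_measure_of) (auto intro: sigma_sets.Basic)

lemma borel_measurable_Lp_dist:
  assumes p: "1 \<le> p" and u: "u \<in> Lp_space d p"
  shows "(\<lambda>g. Lp_dist d p u g) \<in> borel_measurable (Lp_borel d p)"
proof (rule borel_measurableI_less)
  fix a :: ennreal
  show "{g \<in> space (Lp_borel d p). Lp_dist d p u g < a} \<in> sets (Lp_borel d p)"
    unfolding space_Lp_borel
  proof (rule sets_Lp_borelI)
    fix f assume "f \<in> {g \<in> Lp_space d p. Lp_dist d p u g < a}"
    then have f: "f \<in> Lp_space d p" and lt: "Lp_dist d p u f < a" by auto
    obtain r where r: "Lp_dist d p u f = ennreal r" "r \<ge> 0"
      using Lp_norm_less_top[OF Lp_space_diff[OF p u f]] by (cases "Lp_dist d p u f") auto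
    obtain e :: real where e: "e > 0" "ennreal r + ennreal e < a"
    proof (cases a)
      case (real b)
      then have "r < b" using lt r by (simp add: ennreal_less_iff)
      then have "r + (b - r) / 2 < b" by (simp add: field_simps)
      then show ?thesis using that[of "(b - r) / 2"] r real \<open>r < b\<close>
        by (simp add: ennreal_plus[symmetric] ennreal_less_iff del: ennreal_plus)
    next
      case top
      then show ?thesis using that[of 1] by (simp add: ennreal_plus[symmetric] del: ennreal_plus)
    qed
    show "\<exists>e::real>0. \<forall>g\<in>Lp_space d p. Lp_dist d p g f < ennreal e \<longrightarrow>
        g \<in> {g \<in> Lp_space d p. Lp_dist d p u g < a}"
    proof (intro exI[of _ e] conjI ballI impI)
      fix g assume g: "g \<in> Lp_space d p" and ge: "Lp_dist d p g f < ennreal e"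
      have "Lp_dist d p u g = Lp_norm d p (\<lambda>x. (u x - f x) + (f x - g x))" by simp
      also have "\<dots> \<le> Lp_dist d p u f + Lp_dist d p f g"
        by (rule Lp_norm_triangle[OF p Lp_space_diff[OF p u f] Lp_space_diff[OF p f g]])
      also have "\<dots> < ennreal r + ennreal e"
        using ge r by (simp add: Lp_dist_commute[of d p f g] ennreal_add_left_cancel_less)
      also have "\<dots> < a" by (rule e(2))
      finally show "g \<in> {g \<in> Lp_space d p. Lp_dist d p u g < a}" using g by simp
    qed (use e in simp)
  qed auto
qed

lemma esssup_ge_on_set:
  assumes S: "S \<in> sets M" "emeasure M S \<noteq> 0" and ge: "\<And>x. x \<in> S \<Longrightarrow> t \<le> f x"
  shows "t \<le> esssup M f"
proof (rule ccontr)
  assume less: "\<not> t \<le> esssup M f"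
  have "AE x in M. x \<notin> S"
    using esssup_AE[of f M]
  proof eventually_elim
    case (elim x)
    show "x \<notin> S"
    proof
      assume "x \<in> S"
      then have "t \<le> esssup M f" using order.trans[OF ge elim] by blast
      with less show False ..
    qed
  qed
  moreover have "{x \<in> space M. \<not> x \<notin> S} = S"
    using sets.sets_into_space[OF S(1)] by auto
  ultimately have "emeasure M S = 0"
    by (rule AE_iff_measurable[OF S(1), THEN iffD1, rotated])
  with S(2) show False ..
qed

lemma Lp_norm_ge_on_set:
  assumes p: "1 \<le> p" and h: "h \<in> Lp_space d p" and S: "S \<in> sets (cube_measure d)"
    and S_pos: "measure (cube_measure d) S > 0" and t: "t \<ge> 0"
    and ht: "\<And>x. x \<in> S \<Longrightarrow> t \<le> \<bar>h x\<bar>"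
  shows "ennreal (t * measure (cube_measure d) S powr pinv p) \<le> Lp_norm d p h"
proof -
  interpret prob_space "cube_measure d" by (rule prob_space_cube_measure)
  show ?thesis
  proof (cases "p = \<infinity>")
    case True
    have S_nonnull: "emeasure (cube_measure d) S \<noteq> 0"
      using S_pos by (auto simp: measure_def)
    have "ennreal t \<le> esssup (cube_measure d) (\<lambda>x. ennreal \<bar>h x\<bar>)"
      by (rule esssup_ge_on_set[OF S S_nonnull]) (rule ennreal_leI[OF ht])
    then show ?thesis using True S_pos by (simp add: Lp_norm_def pinv_def)
  next
    case False
    define q where "q = real_of_ereal p"
    have q: "q \<ge> 1" using real_of_ereal_ge_1[OF p False] q_def by simp
    have "measure (cube_measure d) S * t powr q = (\<integral>x. indicator S x * t powr q \<partial>cube_measure d)"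
      using S by simp
    also have "\<dots> \<le> (\<integral>x. \<bar>h x\<bar> powr q \<partial>cube_measure d)"
    proof (rule integral_mono)
      show "integrable (cube_measure d) (\<lambda>x. indicator S x * t powr q)"
        using S by (intro integrable_mult_left integrable_real_indicator) (auto simp: emeasure_eq_measure)
      show "integrable (cube_measure d) (\<lambda>x. \<bar>h x\<bar> powr q)"
        using h False Lp_space_finite_iff q_def by blast
      show "indicator S x * t powr q \<le> \<bar>h x\<bar> powr q" for x
        using ht[of x] t q by (cases "x \<in> S") (auto intro!: powr_mono2)
    qed
    finally have "(measure (cube_measure d) S * t powr q) powr (1/q) \<le>
        (\<integral>x. \<bar>h x\<bar> powr q \<partial>cube_measure d) powr (1/q)"
      using q t by (intro powr_mono2) auto
    moreover have "t * measure (cube_measure d) S powr (1/q) =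
        (measure (cube_measure d) S * t powr q) powr (1/q)"
      using t q by (simp add: powr_mult powr_powr)
    ultimately show ?thesis using False
      by (simp add: Lp_norm_def pinv_def q_def[symmetric] ennreal_leI)
  qed
qed

section \<open>The bump functions\<close>

lemma Lam_le_1: "M > 0 \<Longrightarrow> Lam M \<sigma> t \<le> 1"
  by (simp add: Lam_def)

lemma theta_nonneg: "theta s M y x \<ge> 0"
  by (simp add: theta_def)

lemma theta_le_1:
  assumes "M > 0" shows "theta s M y x \<le> 1"
proof -
  have "(\<Sum>i<s. Lam M (y i) (x i)) \<le> (\<Sum>i<s. 1)"
    by (intro sum_mono Lam_le_1 assms)
  then show ?thesis by (simp add: theta_def)
qed

text \<open>Since every \<open>Lam\<close> is at most \<open>1\<close>, the sum defining \<open>theta\<close> can exceed \<open>s - 1\<close> only if all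
  of its terms are positive.\<close>
lemma theta_nonzero_imp_near:
  assumes M: "M > 0" and ne: "theta s M y x \<noteq> 0" and i: "i < s"
  shows "\<bar>x i - y i\<bar> < 1 / M"
proof -
  have pos: "(\<Sum>j<s. Lam M (y j) (x j)) > real s - 1"
    using ne by (simp add: theta_def max_def split: if_splits)
  have "(\<Sum>j<s. Lam M (y j) (x j)) = Lam M (y i) (x i) + (\<Sum>j\<in>{..<s} - {i}. Lam M (y j) (x j))"
    using i by (subst sum.remove[of _ i]) auto
  also have "(\<Sum>j\<in>{..<s} - {i}. Lam M (y j) (x j)) \<le> (\<Sum>j\<in>{..<s} - {i}. 1)"
    by (intro sum_mono Lam_le_1 M)
  also have "(\<Sum>j\<in>{..<s} - {i}. (1::real)) = real s - 1"
    using i by simp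
  finally have "Lam M (y i) (x i) > 0" using pos by linarith
  then have "M * \<bar>x i - y i\<bar> < 1"
    by (auto simp: Lam_def split: if_splits)
  then show ?thesis using M by (simp add: field_simps)
qed

lemma theta_ge_half:
  assumes M: "M > 0" and s: "s \<ge> 1"
    and near: "\<And>i. i < s \<Longrightarrow> \<bar>x i - y i\<bar> \<le> 1 / (2 * M * s)"
  shows "theta s M y x \<ge> 1/2"
proof -
  have "Lam M (y i) (x i) \<ge> 1 - 1 / (2 * s)" if i: "i < s" for i
  proof -
    have "1 / (2 * M * s) < 1 / M" using M s by (simp add: field_simps)
    then have "Lam M (y i) (x i) = 1 - M * \<bar>x i - y i\<bar>"
      using near[OF i] by (auto simp: Lam_def)
    moreover have "M * \<bar>x i - y i\<bar> \<le> M * (1 / (2 * M * s))"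
      using near[OF i] M by (intro mult_left_mono) auto
    ultimately show ?thesis using M by (simp add: field_simps)
  qed
  then have "(\<Sum>i<s. Lam M (y i) (x i)) \<ge> (\<Sum>i<s. 1 - 1 / (2 * real s))"
    by (intro sum_mono) auto
  also have "(\<Sum>i<s. 1 - 1 / (2 * real s)) = real s - 1/2"
    using s by (simp add: field_simps)
  finally show ?thesis by (simp add: theta_def)
qed

lemma theta_in_Lp_space:
  assumes p: "1 \<le> p" and M: "M > 0"
  shows "theta s M y \<in> Lp_space d p"
proof (rule Lp_space_bounded[OF p, where B=1])
  have [measurable]: "(\<lambda>x. x i) \<in> borel_measurable (cube_measure d)" for i
    by (rule borel_measurable_cube_component)
  show "theta s M y \<in> borel_measurable (cube_measure d)"
    unfolding theta_def[abs_def] Lam_def by measurable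
qed (use theta_nonneg theta_le_1[OF M] in auto)

lemma theta_ge_half_on_box:
  assumes M: "M > 0" and s: "1 \<le> s" "s \<le> d"
    and y: "\<And>i. i < s \<Longrightarrow> 1 / M \<le> y i \<and> y i \<le> 1 - 1 / M"
  obtains S where "S \<in> sets (cube_measure d)" "measure (cube_measure d) S = (1 / (M * s)) ^ s"
    "\<And>x. x \<in> S \<Longrightarrow> theta s M y x \<ge> 1/2"
proof
  define r where "r = 1 / (2 * M * s)"
  have r: "0 < r" "r \<le> 1 / M" using M s by (auto simp: r_def field_simps)
  define lo where "lo = (\<lambda>i. y i - r)"
  define hi where "hi = (\<lambda>i. y i + r)"
  have lo_hi: "0 \<le> lo i \<and> lo i \<le> hi i \<and> hi i \<le> 1" if "i < s" for i
    using y[OF that] r by (auto simp: lo_def hi_def)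
  show "cube_box d s lo hi \<in> sets (cube_measure d)"
    by (rule sets_cube_box[OF lo_hi s(2)])
  have "measure (cube_measure d) (cube_box d s lo hi) = (\<Prod>i<s. hi i - lo i)"
    by (rule measure_cube_box[OF lo_hi s(2)])
  also have "\<dots> = (\<Prod>i<s. 1 / (M * s))"
    by (simp add: lo_def hi_def r_def)
  finally show "measure (cube_measure d) (cube_box d s lo hi) = (1 / (M * s)) ^ s"
    by simp
  fix x assume x: "x \<in> cube_box d s lo hi"
  show "theta s M y x \<ge> 1/2"
  proof (rule theta_ge_half[OF M s(1)])
    fix i assume i: "i < s"
    then have "i \<in> {..<d}" using s(2) by simp
    then have "x i \<in> (if i < s then {lo i..hi i} else {0..1})"
      using x by (simp add: cube_box_def PiE_iff)
    then have "x i \<in> {lo i..hi i}" using i by simp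
    then show "\<bar>x i - y i\<bar> \<le> 1 / (2 * M * real s)" by (auto simp: lo_def hi_def r_def)
  qed
qed

text \<open>Coordinates from \<open>d\<close> on are \<open>undefined\<close>, so that the centres lie in the extensional
  cube.\<close>
definition grid_center :: "nat \<Rightarrow> nat \<Rightarrow> real \<Rightarrow> (nat \<Rightarrow> nat) \<Rightarrow> nat \<Rightarrow> real" where
  "grid_center s d M a =
    (\<lambda>i. if i < s then (2 * real (a i) + 1) / M else if i < d then 1/2 else undefined)"

definition grid_indices :: "nat \<Rightarrow> nat \<Rightarrow> (nat \<Rightarrow> nat) set" where
  "grid_indices s L = PiE {..<s} (\<lambda>_. {..<L})"

lemma finite_grid_indices: "finite (grid_indices s L)"
  by (simp add: grid_indices_def finite_PiE)

lemma card_grid_indices: "card (grid_indices s L) = L ^ s"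
  by (simp add: grid_indices_def card_PiE)

lemma grid_center_bounds:
  assumes M: "M = 2 * real L" and a: "a \<in> grid_indices s L" and i: "i < s"
  shows "1 / M \<le> grid_center s d M a i \<and> grid_center s d M a i \<le> 1 - 1 / M"
proof
  have ai: "a i < L" using a i by (auto simp: grid_indices_def)
  then have M_pos: "M > 0" using M by simp
  show "1 / M \<le> grid_center s d M a i"
    using i M_pos by (simp add: grid_center_def divide_right_mono)
  have "2 * real (a i) + 1 \<le> M - 1" using ai M by linarith
  then have "(2 * real (a i) + 1) / M \<le> (M - 1) / M" using M_pos by (intro divide_right_mono) auto
  also have "(M - 1) / M = 1 - 1 / M" using M_pos by (simp add: field_simps)
  finally show "grid_center s d M a i \<le> 1 - 1 / M" using i by (simp add: grid_center_def)
qed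

lemma grid_center_in_cube:
  assumes M: "M = 2 * real L" and a: "a \<in> grid_indices s L" and sd: "s \<le> d"
  shows "grid_center s d M a \<in> cube d"
proof -
  have "grid_center s d M a i \<in> {0..1}" if "i < d" for i
  proof (cases "i < s")
    case True
    then have "a i < L" using a by (auto simp: grid_indices_def)
    then have "0 < 1 / M" using M by simp
    moreover have "1 / M \<le> grid_center s d M a i" "grid_center s d M a i \<le> 1 - 1 / M"
      using grid_center_bounds[OF M a True, where d=d] by auto
    ultimately have "0 \<le> grid_center s d M a i" "grid_center s d M a i \<le> 1" by linarith+
    then show ?thesis by simp
  next
    case False
    then show ?thesis using that by (simp add: grid_center_def)
  qed
  moreover have "grid_center s d M a i = undefined" if "\<not> i < d" for i
    using that sd by (simp add: grid_center_def)
  ultimately show ?thesis unfolding cube_def PiE_iff extensional_def by simp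
qed

lemma theta_grid_center_disjoint:
  assumes M: "M > 0" and a: "a \<in> grid_indices s L" and b: "b \<in> grid_indices s L"
    and "theta s M (grid_center s d M a) x \<noteq> 0" "theta s M (grid_center s d M b) x \<noteq> 0"
  shows "a = b"
proof
  fix i
  show "a i = b i"
  proof (cases "i < s")
    case True
    have "\<bar>x i - grid_center s d M a i\<bar> < 1 / M" "\<bar>x i - grid_center s d M b i\<bar> < 1 / M"
      using theta_nonzero_imp_near[OF M _ True] assms(4,5) by auto
    then have "M * \<bar>x i - grid_center s d M a i\<bar> < 1" "M * \<bar>x i - grid_center s d M b i\<bar> < 1"
      using M by (simp_all add: field_simps)
    then have "\<bar>M * x i - M * grid_center s d M a i\<bar> < 1" "\<bar>M * x i - M * grid_center s d M b i\<bar> < 1"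
      using M by (simp_all add: abs_mult right_diff_distrib[symmetric])
    moreover have "M * grid_center s d M a i = 2 * real (a i) + 1" "M * grid_center s d M b i = 2 * real (b i) + 1"
      using True M by (simp_all add: grid_center_def)
    ultimately show ?thesis by linarith
  next
    case False
    then show ?thesis using a b by (simp add: grid_indices_def PiE_iff extensional_def)
  qed
qed

text \<open>Each sample point lies in the support of at most one grid bump.\<close>
lemma card_grid_bumps_hit_le:
  assumes M: "M > 0"
  shows "card {a \<in> grid_indices s L. \<exists>x\<in>set xs. theta s M (grid_center s d M a) x \<noteq> 0}
    \<le> length xs"
proof -
  have single: "card {a \<in> grid_indices s L. theta s M (grid_center s d M a) x \<noteq> 0} \<le> 1" for x
  proof -
    have "finite {a \<in> grid_indices s L. theta s M (grid_center s d M a) x \<noteq> 0}"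
      using finite_grid_indices by simp
    then have "card {a \<in> grid_indices s L. theta s M (grid_center s d M a) x \<noteq> 0} \<le> Suc 0"
      using theta_grid_center_disjoint[OF M] by (subst card_le_Suc0_iff_eq) blast+
    then show ?thesis by simp
  qed
  have "card {a \<in> grid_indices s L. \<exists>x\<in>set xs. theta s M (grid_center s d M a) x \<noteq> 0}
      = card (\<Union>x\<in>set xs. {a \<in> grid_indices s L. theta s M (grid_center s d M a) x \<noteq> 0})"
    by (rule arg_cong[of _ _ card]) auto
  also have "\<dots> \<le> (\<Sum>x\<in>set xs. card {a \<in> grid_indices s L. theta s M (grid_center s d M a) x \<noteq> 0})"
    by (rule card_UN_le) simp
  also have "\<dots> \<le> (\<Sum>x\<in>set xs. 1)" by (intro sum_mono single)
  also have "\<dots> \<le> length xs" by (simp add: card_length)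
  finally show ?thesis .
qed

lemma card_grid_bumps_missed_ge:
  assumes M: "M > 0"
  shows "real (L ^ s) - real (length xs) \<le>
    real (card {a \<in> grid_indices s L. \<forall>x\<in>set xs. theta s M (grid_center s d M a) x = 0})"
proof -
  define Hit where "Hit = {a \<in> grid_indices s L. \<exists>x\<in>set xs. theta s M (grid_center s d M a) x \<noteq> 0}"
  have "{a \<in> grid_indices s L. \<forall>x\<in>set xs. theta s M (grid_center s d M a) x = 0} = grid_indices s L - Hit"
    by (auto simp: Hit_def)
  moreover have "Hit \<subseteq> grid_indices s L" by (auto simp: Hit_def)
  then have "card Hit \<le> L ^ s"
    using card_mono[OF finite_grid_indices] by (simp add: card_grid_indices)
  moreover have "card Hit \<le> length xs"
    unfolding Hit_def by (rule card_grid_bumps_hit_le[OF M])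
  ultimately show ?thesis
    using \<open>Hit \<subseteq> grid_indices s L\<close>
    by (simp add: card_Diff_subset finite_subset[OF _ finite_grid_indices] card_grid_indices of_nat_diff)
qed

section \<open>Lower bounds for adaptive methods\<close>

lemma Lp_dist_pair_ge:
  assumes p: "1 \<le> p" and u0: "u0 \<in> Lp_space d p" and h: "h \<in> Lp_space d p"
    and g: "g \<in> Lp_space d p" and c: "c \<ge> 0"
    and S: "S \<in> sets (cube_measure d)" "measure (cube_measure d) S > 0"
    and h_ge: "\<And>x. x \<in> S \<Longrightarrow> h x \<ge> 1/2"
  shows "ennreal (c * measure (cube_measure d) S powr pinv p) \<le>
    Lp_dist d p (\<lambda>x. u0 x + c * h x) g + Lp_dist d p (\<lambda>x. u0 x - c * h x) g"
proof -
  have ch: "(\<lambda>x. c * h x) \<in> Lp_space d p" by (rule Lp_space_cmult[OF p h])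
  have plus: "(\<lambda>x. u0 x + c * h x - g x) \<in> Lp_space d p"
    by (rule Lp_space_diff[OF p Lp_space_add[OF p u0 ch] g])
  have minus: "(\<lambda>x. g x - (u0 x - c * h x)) \<in> Lp_space d p"
    by (rule Lp_space_diff[OF p g Lp_space_diff[OF p u0 ch]])
  have "ennreal (c * measure (cube_measure d) S powr pinv p) \<le>
      Lp_norm d p (\<lambda>x. (u0 x + c * h x - g x) + (g x - (u0 x - c * h x)))"
  proof (rule Lp_norm_ge_on_set[OF p Lp_space_add[OF p plus minus] S c])
    fix x assume "x \<in> S"
    have "c * 1 \<le> c * (2 * h x)" using h_ge[OF \<open>x \<in> S\<close>] c by (intro mult_left_mono) auto
    then show "c \<le> \<bar>u0 x + c * h x - g x + (g x - (u0 x - c * h x))\<bar>" by simp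
  qed
  also have "\<dots> \<le> Lp_dist d p (\<lambda>x. u0 x + c * h x) g + Lp_dist d p g (\<lambda>x. u0 x - c * h x)"
    by (rule Lp_norm_triangle[OF p plus minus])
  finally show ?thesis by (simp add: Lp_dist_commute[of d p g])
qed

lemma length_samples: "length (samples f u n) = n"
  by (induction n) (simp_all add: Let_def)

lemma samples_cong: "(\<And>x. x \<in> set (samples f u n) \<Longrightarrow> v x = u x) \<Longrightarrow> samples f v n = samples f u n"
proof (induction n)
  case (Suc n)
  have "set (samples f u n) \<subseteq> set (samples f u (Suc n))" by (auto simp: Let_def)
  then have "samples f v n = samples f u n" "map v (samples f u n) = map u (samples f u n)"
    using Suc by auto
  then show ?case by (simp add: Let_def del: map_eq_conv)
qed simp

text \<open>A deterministic method cannot distinguish inputs that agree with \<open>u\<^sub>0\<close> at the \<open>n\<close> points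
  it samples on \<open>u\<^sub>0\<close>: by induction, it then samples them at the same points.\<close>
lemma Alg_obtains_fooling_points:
  assumes "A \<in> Alg d n U Y"
  obtains xs g where "length xs = n" "g \<in> Y"
    "\<And>v. v \<in> U \<Longrightarrow> (\<And>x. x \<in> set xs \<Longrightarrow> v x = u0 x) \<Longrightarrow> A v = g"
proof -
  obtain f Q where Q: "\<And>xs ys. Q xs ys \<in> Y"
    and A_eq: "\<And>u. u \<in> U \<Longrightarrow> A u = Q (samples f u n) (map u (samples f u n))"
    using assms unfolding Alg_def by blast
  define xs where "xs = samples f u0 n"
  have "A v = Q xs (map u0 xs)"
    if "v \<in> U" and agree: "\<And>x. x \<in> set xs \<Longrightarrow> v x = u0 x" for v
  proof -
    have "samples f v n = xs"
      unfolding xs_def by (rule samples_cong) (use agree in \<open>simp add: xs_def\<close>)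
    then have "A v = Q xs (map v xs)"
      using A_eq[OF that(1)] by simp
    also have "map v xs = map u0 xs"
      using agree by simp
    finally show ?thesis .
  qed
  then show ?thesis
    using that[of xs "Q xs (map u0 xs)"] Q by (simp add: xs_def length_samples)
qed

lemma Lp_dist_grid_pair_ge:
  assumes p: "1 \<le> p" and M: "M = 2 * real L" and a: "a \<in> grid_indices s L"
    and s: "1 \<le> s" "s \<le> d" and u0: "u0 \<in> Lp_space d p" and g: "g \<in> Lp_space d p"
    and c: "c \<ge> 0"
  shows "ennreal (c * ((1 / (M * s)) ^ s) powr pinv p) \<le>
    Lp_dist d p (\<lambda>x. u0 x + c * theta s M (grid_center s d M a) x) g +
    Lp_dist d p (\<lambda>x. u0 x - c * theta s M (grid_center s d M a) x) g"
proof -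
  have "a 0 < L" using a s(1) by (auto simp: grid_indices_def PiE_iff)
  then have M_pos: "M > 0" using M by simp
  have "1 / M \<le> grid_center s d M a i \<and> grid_center s d M a i \<le> 1 - 1 / M" if "i < s" for i
    by (rule grid_center_bounds[OF M a that])
  then obtain S where S: "S \<in> sets (cube_measure d)" "measure (cube_measure d) S = (1 / (M * s)) ^ s"
    "\<And>x. x \<in> S \<Longrightarrow> theta s M (grid_center s d M a) x \<ge> 1/2"
    using theta_ge_half_on_box[OF M_pos s] by blast
  have "measure (cube_measure d) S > 0"
    using S(2) M_pos s by simp
  then show ?thesis
    using Lp_dist_pair_ge[OF p u0 theta_in_Lp_space[OF p M_pos] g c S(1) _ S(3)]
    by (simp add: S(2))
qed

text \<open>All but at most \<open>n\<close> grid bumps vanish at the fooling points of a method with \<open>n\<close> samples.\<close>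
lemma sum_grid_errors_ge:
  assumes p: "1 \<le> p" and L: "L > 0" and M: "M = 2 * real L" and s: "1 \<le> s" "s \<le> d"
    and u0: "u0 \<in> Lp_space d p" and c: "c \<ge> 0"
    and A: "A \<in> Alg d n U (Lp_space d p)"
    and U: "\<And>a. a \<in> grid_indices s L \<Longrightarrow>
      (\<lambda>x. u0 x + c * theta s M (grid_center s d M a) x) \<in> U \<and>
      (\<lambda>x. u0 x - c * theta s M (grid_center s d M a) x) \<in> U"
  shows "ennreal (c * ((1 / (M * s)) ^ s) powr pinv p * (real (L ^ s) - real n)) \<le>
    (\<Sum>a\<in>grid_indices s L.
      Lp_dist d p (\<lambda>x. u0 x + c * theta s M (grid_center s d M a) x)
        (A (\<lambda>x. u0 x + c * theta s M (grid_center s d M a) x)) +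
      Lp_dist d p (\<lambda>x. u0 x - c * theta s M (grid_center s d M a) x)
        (A (\<lambda>x. u0 x - c * theta s M (grid_center s d M a) x)))"
    (is "_ \<le> (\<Sum>a\<in>_. ?err a)")
proof -
  define C where "C = c * ((1 / (M * s)) ^ s) powr pinv p"
  obtain xs g where xs: "length xs = n" and g: "g \<in> Lp_space d p"
    and fooled: "\<And>v. v \<in> U \<Longrightarrow> (\<And>x. x \<in> set xs \<Longrightarrow> v x = u0 x) \<Longrightarrow> A v = g"
    using Alg_obtains_fooling_points[OF A] by blast
  define Miss where "Miss = {a \<in> grid_indices s L. \<forall>x\<in>set xs. theta s M (grid_center s d M a) x = 0}"
  have miss: "ennreal C \<le> ?err a" if a: "a \<in> Miss" for a
  proof -
    have aJ: "a \<in> grid_indices s L" using a by (simp add: Miss_def)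
    have "A (\<lambda>x. u0 x + c * theta s M (grid_center s d M a) x) = g"
      "A (\<lambda>x. u0 x - c * theta s M (grid_center s d M a) x) = g"
      using U[OF aJ] a by (auto simp: Miss_def intro!: fooled)
    then show ?thesis
      using Lp_dist_grid_pair_ge[OF p M aJ s u0 g c] by (simp add: C_def)
  qed
  have "real (L ^ s) - real n \<le> real (card Miss)"
    using card_grid_bumps_missed_ge[where s=s and L=L and xs=xs and d=d] L M xs by (simp add: Miss_def)
  then have "ennreal (C * (real (L ^ s) - real n)) \<le> ennreal (C * real (card Miss))"
    using c by (intro ennreal_leI mult_left_mono) (simp_all add: C_def)
  also have "\<dots> = (\<Sum>a\<in>Miss. ennreal C)"
    using c by (simp add: C_def ennreal_mult ennreal_of_nat_eq_real_of_nat mult.commute)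
  also have "\<dots> \<le> (\<Sum>a\<in>Miss. ?err a)"
    using miss by (rule sum_mono)
  also have "\<dots> \<le> (\<Sum>a\<in>grid_indices s L. ?err a)"
    using finite_grid_indices by (intro sum_mono2) (auto simp: Miss_def)
  finally show ?thesis by (simp add: C_def)
qed

text \<open>Linearity of expectation for the affine map \<open>n \<mapsto> C (N - n)\<close>; the truncation at \<open>0\<close> by
  \<open>ennreal\<close> makes the case \<open>m > N\<close> trivial.\<close>
lemma nn_integral_deficit_ge:
  assumes P: "prob_space P" and n: "n \<in> measurable P (count_space UNIV)"
    and mean: "(\<integral>\<^sup>+ \<omega>. of_nat (n \<omega>) \<partial>P) \<le> of_nat m" and C: "C \<ge> 0"
  shows "ennreal (C * (real N - real m)) \<le> (\<integral>\<^sup>+ \<omega>. ennreal (C * (real N - real (n \<omega>))) \<partial>P)"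
proof (cases "m \<le> N")
  case False
  then have "C * (real N - real m) \<le> 0" using C by (simp add: mult_nonneg_nonpos)
  then show ?thesis by (simp add: ennreal_neg)
next
  case True
  interpret prob_space P by (rule P)
  have [measurable]: "(\<lambda>\<omega>. f (n \<omega>)) \<in> borel_measurable P" for f :: "nat \<Rightarrow> ennreal"
    by (rule measurable_compose[OF n]) simp
  have "0 \<le> C * (real N - real m)" using True C by simp
  then have "ennreal C * of_nat m + ennreal (C * (real N - real m)) = ennreal (C * real m + C * (real N - real m))"
    using C by (simp add: ennreal_plus ennreal_mult ennreal_of_nat_eq_real_of_nat)
  also have "C * real m + C * (real N - real m) = C * real N"
    by (simp add: algebra_simps)
  also have "ennreal (C * real N) = (\<integral>\<^sup>+ \<omega>. ennreal (C * real N) \<partial>P)"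
    by (simp add: emeasure_space_1)
  also have "\<dots> \<le> (\<integral>\<^sup>+ \<omega>. ennreal C * of_nat (n \<omega>) + ennreal (C * (real N - real (n \<omega>))) \<partial>P)"
  proof (rule nn_integral_mono)
    fix \<omega>
    have "ennreal (C * real N) \<le> ennreal (C * real (n \<omega>)) + ennreal (C * (real N - real (n \<omega>)))"
      using C by (simp add: ennreal_plus_if algebra_simps)
    then show "ennreal (C * real N) \<le> ennreal C * of_nat (n \<omega>) + ennreal (C * (real N - real (n \<omega>)))"
      using C by (simp add: ennreal_mult ennreal_of_nat_eq_real_of_nat)
  qed
  also have "\<dots> = ennreal C * (\<integral>\<^sup>+ \<omega>. of_nat (n \<omega>) \<partial>P) +
      (\<integral>\<^sup>+ \<omega>. ennreal (C * (real N - real (n \<omega>))) \<partial>P)"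
    by (simp add: nn_integral_add nn_integral_cmult)
  also have "\<dots> \<le> ennreal C * of_nat m + (\<integral>\<^sup>+ \<omega>. ennreal (C * (real N - real (n \<omega>))) \<partial>P)"
    using mean by (intro add_right_mono mult_left_mono) auto
  finally show ?thesis
    by (simp add: ennreal_add_left_cancel_le ennreal_mult_eq_top_iff)
qed

lemma ennreal_divide_le:
  fixes a b :: real
  assumes b: "b > 0" and le: "ennreal a \<le> ennreal b * x"
  shows "ennreal (a / b) \<le> x"
proof -
  have "ennreal (a / b) = ennreal (1 / b) * ennreal a"
    using b by (simp add: ennreal_mult'[symmetric])
  also have "\<dots> \<le> ennreal (1 / b) * (ennreal b * x)"
    using le by (rule mult_left_mono) simp
  also have "\<dots> = (ennreal (1 / b) * ennreal b) * x"
    by (simp only: mult.assoc)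
  also have "ennreal (1 / b) * ennreal b = 1"
    using b by (simp add: ennreal_mult[symmetric])
  finally show ?thesis by simp
qed

lemma nn_integral_sum_pairs_le_SUP:
  assumes J: "finite J" and v: "\<And>a. a \<in> J \<Longrightarrow> v a \<in> U" and w: "\<And>a. a \<in> J \<Longrightarrow> w a \<in> U"
    and G: "\<And>u. u \<in> U \<Longrightarrow> G u \<in> borel_measurable P"
  shows "(\<integral>\<^sup>+ \<omega>. (\<Sum>a\<in>J. G (v a) \<omega> + G (w a) \<omega>) \<partial>P) \<le>
    ennreal (2 * real (card J)) * (SUP u\<in>U. \<integral>\<^sup>+ \<omega>. G u \<omega> \<partial>P)"
proof -
  let ?worst = "SUP u\<in>U. \<integral>\<^sup>+ \<omega>. G u \<omega> \<partial>P"
  have "(\<integral>\<^sup>+ \<omega>. (\<Sum>a\<in>J. G (v a) \<omega> + G (w a) \<omega>) \<partial>P) =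
      (\<Sum>a\<in>J. \<integral>\<^sup>+ \<omega>. G (v a) \<omega> + G (w a) \<omega> \<partial>P)"
    by (rule nn_integral_sum) (intro borel_measurable_add G v w)
  also have "\<dots> = (\<Sum>a\<in>J. (\<integral>\<^sup>+ \<omega>. G (v a) \<omega> \<partial>P) + (\<integral>\<^sup>+ \<omega>. G (w a) \<omega> \<partial>P))"
    by (rule sum.cong[OF refl], rule nn_integral_add) (intro G v w, assumption)+
  also have "\<dots> \<le> (\<Sum>a\<in>J. ?worst + ?worst)"
    by (intro sum_mono add_mono SUP_upper v w)
  also have "\<dots> = ennreal (real (card J)) * (2 * ?worst)"
    by (simp add: ennreal_of_nat_eq_real_of_nat mult_2)
  also have "\<dots> = ennreal (2 * real (card J)) * ?worst"
    by (simp add: ennreal_mult mult.assoc mult.commute mult.left_commute)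
  finally show ?thesis .
qed

lemma err_MC_ge_grid_bound:
  assumes p: "1 \<le> p" and L: "L > 0" and M: "M = 2 * real L" and s: "1 \<le> s" "s \<le> d"
    and u0: "u0 \<in> Lp_space d p" and c: "c \<ge> 0" and U_cont: "U \<subseteq> Ccube d"
    and U: "\<And>a. a \<in> grid_indices s L \<Longrightarrow>
      (\<lambda>x. u0 x + c * theta s M (grid_center s d M a) x) \<in> U \<and>
      (\<lambda>x. u0 x - c * theta s M (grid_center s d M a) x) \<in> U"
  shows "ennreal (c * ((1 / (M * s)) ^ s) powr pinv p * (real (L ^ s) - real m) / (2 * real (L ^ s)))
    \<le> err_MC TYPE('w) d p U m"
  unfolding err_MC_def
proof (rule INF_greatest, clarify)
  fix P :: "'w measure" and A mm assume "(P, A, mm) \<in> Alg_MC TYPE('w) d p U m"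
  then have P: "prob_space P" and mm: "mm \<in> measurable P (count_space UNIV)"
    and mean: "(\<integral>\<^sup>+ \<omega>. of_nat (mm \<omega>) \<partial>P) \<le> of_nat m"
    and A_meas: "\<And>u. u \<in> U \<Longrightarrow> (\<lambda>\<omega>. A \<omega> u) \<in> measurable P (Lp_borel d p)"
    and A: "\<And>\<omega>. \<omega> \<in> space P \<Longrightarrow> A \<omega> \<in> Alg d (mm \<omega>) U (Lp_space d p)"
    unfolding Alg_MC_def by auto
  define C where "C = c * ((1 / (M * s)) ^ s) powr pinv p"
  define N where "N = L ^ s"
  have err_meas: "(\<lambda>\<omega>. Lp_dist d p u (A \<omega> u)) \<in> borel_measurable P" if "u \<in> U" for u
  proof -
    have "u \<in> Lp_space d p" using that U_cont Ccube_subset_Lp_space[OF p] by blast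
    then show ?thesis
      by (rule measurable_compose[OF A_meas[OF that] borel_measurable_Lp_dist[OF p]])
  qed
  have "ennreal (C * (real N - real m)) \<le> (\<integral>\<^sup>+ \<omega>. ennreal (C * (real N - real (mm \<omega>))) \<partial>P)"
    using c by (intro nn_integral_deficit_ge[OF P mm mean]) (simp add: C_def)
  also have "\<dots> \<le> (\<integral>\<^sup>+ \<omega>. (\<Sum>a\<in>grid_indices s L.
      Lp_dist d p (\<lambda>x. u0 x + c * theta s M (grid_center s d M a) x)
        (A \<omega> (\<lambda>x. u0 x + c * theta s M (grid_center s d M a) x)) +
      Lp_dist d p (\<lambda>x. u0 x - c * theta s M (grid_center s d M a) x)
        (A \<omega> (\<lambda>x. u0 x - c * theta s M (grid_center s d M a) x))) \<partial>P)"
    using sum_grid_errors_ge[OF p L M s u0 c A U] by (intro nn_integral_mono) (simp add: C_def N_def)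
  also have "\<dots> \<le> ennreal (2 * real (card (grid_indices s L))) *
      (SUP u\<in>U. \<integral>\<^sup>+ \<omega>. Lp_dist d p u (A \<omega> u) \<partial>P)"
    by (rule nn_integral_sum_pairs_le_SUP[where G = "\<lambda>u \<omega>. Lp_dist d p u (A \<omega> u)",
          OF finite_grid_indices]) (simp_all add: U err_meas)
  finally show "ennreal (c * ((1 / (M * s)) ^ s) powr pinv p * (real (L ^ s) - real m) / (2 * real (L ^ s)))
      \<le> (SUP u\<in>U. \<integral>\<^sup>+ \<omega>. Lp_dist d p u (A \<omega> u) \<partial>P)"
    using L unfolding C_def N_def card_grid_indices by (intro ennreal_divide_le) simp_all
qed

section \<open>The rate\<close>

lemma powr_amplitude_eq:
  fixes Y \<pi> :: real
  assumes "Y > 0"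
  shows "1 / Y * ((1 / Y) ^ s) powr \<pi> = Y powr (- (1 + real s * \<pi>))"
proof -
  have "((1 / Y) ^ s) powr \<pi> = (1 / Y) powr (real s * \<pi>)"
    using assms by (simp add: powr_realpow[symmetric] powr_powr)
  also have "\<dots> = Y powr (- (real s * \<pi>))"
    using assms by (simp add: powr_divide powr_minus_divide)
  moreover have "Y powr (- (1 + real s * \<pi>)) = Y powr (- 1) * Y powr (- (real s * \<pi>))"
    by (simp only: minus_add_distrib powr_add)
  moreover have "Y powr (- 1) = 1 / Y"
    using assms by (simp add: powr_minus_divide)
  ultimately show ?thesis by simp
qed

lemma four_mul_le_power:
  fixes s m L :: nat
  assumes s: "1 \<le> s" and m: "1 \<le> m" and L: "4 * real m powr (1 / s) \<le> real L"
  shows "4 * real m \<le> real (L ^ s)"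
proof -
  define r where "r = real m powr (1 / s)"
  have r: "r \<ge> 1" using m s by (simp add: r_def ge_one_powr_ge_zero)
  have "4 * real m = 4 * r ^ s" using m s by (simp add: r_def powr_realpow[symmetric] powr_powr)
  also have "\<dots> \<le> 4 ^ s * r ^ s"
    using s r by (intro mult_right_mono) (auto simp: self_le_power)
  also have "\<dots> = (4 * r) ^ s" by (simp add: power_mult_distrib)
  also have "\<dots> \<le> real L ^ s" using L r by (intro power_mono) (auto simp: r_def)
  finally show ?thesis by simp
qed

lemma powr_rate_scale:
  fixes s m :: nat and \<pi> e :: real
  assumes s: "1 \<le> s" and e: "e = 1 + real s * \<pi>"
  shows "(16 * real s * real m powr (1 / s)) powr (- e) =
    4 powr e * ((64 * real s) powr (- e) * real m powr (- \<pi> - 1 / real s))"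
proof -
  have "(16 * real s * real m powr (1 / s)) powr (- e) = (16 * real s) powr (- e) * (real m powr (1 / s)) powr (- e)"
    by (rule powr_mult)
  also have "(16 * real s) powr (- e) = 4 powr e * (64 * real s) powr (- e)"
  proof -
    have "(64 * real s) powr (- e) = 4 powr (- e) * (16 * real s) powr (- e)"
      using powr_mult[of 4 "16 * real s" "- e"] by simp
    moreover have "(4::real) powr e * 4 powr (- e) = 1" by (simp add: powr_add[symmetric])
    ultimately show ?thesis by (simp add: mult.assoc[symmetric])
  qed
  also have "(real m powr (1 / s)) powr (- e) = real m powr (- \<pi> - 1 / real s)"
  proof -
    have "1 / real s * (- e) = - \<pi> - 1 / real s" using s by (simp add: e field_simps)
    then show ?thesis by (simp add: powr_powr)
  qed
  finally show ?thesis by (simp only: ac_simps)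
qed

text \<open>Here \<open>L\<^sup>s \<ge> 4m\<close> gives \<open>(L\<^sup>s - m) / (2L\<^sup>s) \<ge> 3/8\<close>, and \<open>2Ls \<le> 16 s m\<^sup>1\<^sup>/\<^sup>s\<close> bounds the
  amplitude factor \<open>(2Ls)\<^sup>-\<^sup>1\<^sup>-\<^sup>s\<^sup>/\<^sup>p\<close> from below.\<close>
lemma rate_le_grid_bound:
  fixes lam \<pi> :: real and s m L :: nat
  assumes lam: "lam > 0" and s: "1 \<le> s" and m: "1 \<le> m" and \<pi>: "0 \<le> \<pi>"
    and L_lower: "4 * real m powr (1 / s) \<le> real L" and L_upper: "real L \<le> 8 * real m powr (1 / s)"
  shows "(lam / 2) / ((64 * real s) powr (1 + real s * \<pi>)) * real m powr (- \<pi> - 1 / real s)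
    \<le> lam / (2 * real L * s) * ((1 / (2 * real L * s)) ^ s) powr \<pi>
        * (real (L ^ s) - real m) / (2 * real (L ^ s))"
proof -
  define e where "e = 1 + real s * \<pi>"
  define Y where "Y = 2 * real L * s"
  define D where "D = (64 * real s) powr (- e) * real m powr (- \<pi> - 1 / real s)"
  define ratio where "ratio = (real (L ^ s) - real m) / (2 * real (L ^ s))"
  have D0: "D \<ge> 0" by (simp add: D_def)
  have e: "e \<ge> 1" using \<pi> by (simp add: e_def)
  have r: "real m powr (1 / s) \<ge> 1" using m s by (simp add: ge_one_powr_ge_zero)
  have Y: "Y > 0" using L_lower r s by (simp add: Y_def)
  have grid_size: "4 * real m \<le> real (L ^ s)" by (rule four_mul_le_power[OF s m L_lower])
  moreover have "1 \<le> real m" using m by simp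
  ultimately have "real (L ^ s) > 0" by linarith
  then have ratio: "3/8 \<le> ratio"
    using grid_size by (simp add: ratio_def field_simps)
  have "Y \<le> 16 * real s * real m powr (1 / s)"
    using mult_right_mono[OF L_upper, of "2 * real s"] by (simp add: Y_def algebra_simps)
  then have "(16 * real s * real m powr (1 / s)) powr (- e) \<le> Y powr (- e)"
    using Y e by (intro powr_mono2') auto
  then have "4 powr e * D \<le> Y powr (- e)"
    by (simp only: D_def powr_rate_scale[OF s e_def])
  moreover have "4 * D \<le> 4 powr e * D"
    using powr_mono[OF e, of 4] D0 by (intro mult_right_mono) auto
  ultimately have "4 * D \<le> Y powr (- e)" by linarith
  then have "3/8 * (4 * D) \<le> ratio * Y powr (- e)"
    by (rule mult_mono[OF ratio]) (use ratio D0 in linarith)+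
  then have "D / 2 \<le> ratio * Y powr (- e)"
    using D0 by linarith
  have "(lam / 2) / ((64 * real s) powr e) * real m powr (- \<pi> - 1 / real s) = lam * (D / 2)"
    by (simp only: D_def powr_minus divide_inverse ac_simps)
  also have "\<dots> \<le> lam * (ratio * Y powr (- e))"
    using \<open>D / 2 \<le> _\<close> lam by (intro mult_left_mono) auto
  also have "\<dots> = (lam * (1 / Y * ((1 / Y) ^ s) powr \<pi>)) * ratio"
    using powr_amplitude_eq[OF Y, of s \<pi>] by (simp only: e_def ac_simps)
  also have "\<dots> = lam / Y * ((1 / Y) ^ s) powr \<pi> * ratio"
    by (simp only: times_divide_eq_right times_divide_eq_left mult_1 mult_1_right)
  finally show ?thesis by (simp only: e_def Y_def ratio_def times_divide_eq_right)
qed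

theorem theorem2p6:
  fixes d m s :: nat and U :: "((nat \<Rightarrow> real) \<Rightarrow> real) set"
    and u0 :: "(nat \<Rightarrow> real) \<Rightarrow> real" and lam :: real and p :: ereal
  defines "M \<equiv> real_of_int (8 * \<lceil>real m powr (1 / real s)\<rceil>)"
  assumes "1 \<le> s" and "s \<le> d" and "1 \<le> m"
    and "U \<subseteq> Ccube d"
    and "lam > 0" and "u0 \<in> Ccube d"
    and "\<forall>\<nu>\<in>{-1, 1::real}. \<forall>y\<in>cube d.
           (\<lambda>x. u0 x + \<nu> * (lam / (M * real s)) * theta s M y x) \<in> U"
    and "1 \<le> p"
  shows "err_MC TYPE('w) d p U m \<ge>
    ennreal ((lam / 2) / ((64 * real s) powr (1 + real s * pinv p))
             * real m powr (- pinv p - 1 / real s))"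
proof -
  note s = assms(2,3) and m = assms(4) and lam = assms(6) and perturb = assms(8) and p = assms(9)
  define r where "r = real m powr (1 / real s)"
  have r: "r \<ge> 1" using m s(1) by (simp add: r_def ge_one_powr_ge_zero)
  define L where "L = 4 * nat \<lceil>r\<rceil>"
  have L: "real L = 4 * of_int \<lceil>r\<rceil>" "L > 0" using r by (simp_all add: L_def)
  have L_bounds: "4 * r \<le> real L" "real L \<le> 8 * r"
    using L(1) r le_of_int_ceiling[of r] of_int_ceiling_le_add_one[of r] by linarith+
  have M: "M = 2 * real L" using L by (simp add: M_def r_def[symmetric])
  define c where "c = lam / (M * real s)"
  have "ennreal ((lam / 2) / ((64 * real s) powr (1 + real s * pinv p)) * real m powr (- pinv p - 1 / real s))
      \<le> ennreal (c * ((1 / (M * s)) ^ s) powr pinv p * (real (L ^ s) - real m) / (2 * real (L ^ s)))"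
    using rate_le_grid_bound[OF lam s(1) m pinv_nonneg[OF p] L_bounds[unfolded r_def]]
    by (intro ennreal_leI) (simp add: c_def M)
  also have "\<dots> \<le> err_MC TYPE('w) d p U m"
  proof (rule err_MC_ge_grid_bound[OF p L(2) M s])
    show "u0 \<in> Lp_space d p" using assms(7) Ccube_subset_Lp_space[OF p] by blast
    show "c \<ge> 0" using lam L(2) unfolding c_def M by simp
    show "(\<lambda>x. u0 x + c * theta s M (grid_center s d M a) x) \<in> U \<and>
        (\<lambda>x. u0 x - c * theta s M (grid_center s d M a) x) \<in> U" if "a \<in> grid_indices s L" for a
      using perturb grid_center_in_cube[OF M that s(2)] by (force simp: c_def)
  qed (use assms(5) in auto)
  finally show ?thesis .
qed

end
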